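(* Let $n,d\ge 1$, $r\in[0,1]$, $\omega\ge 0$, $\alpha\in(0,1]$, $K_\omega,K_\alpha>0$, and $0<\mu\le L\le nL$. Put $\mu^r_{\omega,\alpha}=\frac{rd}{(1-r)K_\omega+rK_\alpha}$ and $K^r=(1-r)K_\omega+rK_\alpha$. For $p,\tau\in(0,1]$ and $L_{\max}\in[L,nL]$ let $$T(p,\tau;L_{\max})=\max\Big\{\sqrt{\tfrac{L}{\alpha p\mu}},\sqrt{\tfrac{L}{\alpha\tau\mu}},\sqrt{\tfrac{\sqrt{LL_{\max}}(\omega+1)\sqrt{\omega\tau}}{\alpha\sqrt n\,\mu}},\sqrt{\tfrac{\sqrt{LL_{\max}}\sqrt{\omega+1}\sqrt{\omega\tau}}{\alpha\sqrt p\sqrt n\,\mu}},\sqrt{\tfrac{L_{\max}\omega(\omega+1)^2p}{n\mu}},\sqrt{\tfrac{L_{\max}\omega}{np\mu}},\tfrac1\alpha,\tfrac1\tau,\omega+1,\tfrac1p\Big\}$$ and $M(p,\tau;L_{\max})=\big((1-r)K_\omega+r(K_\alpha+pd)\big)\,T(p,\tau;L_{\max})+d$. Choose $$p^\star=\min\Big\{\frac{1}{\omega+1},\frac{1}{\mu^r_{\omega,\alpha}}\Big\}\quad(\text{with }1/0=+\infty),\qquad \tau^\star=\frac{(p^\star)^{1/3}}{(\omega+1)^{2/3}}.$$ Then, up to universal multiplicative constants (and logarithmic factors): (i) $(p^\star,\tau^\star)$ minimizes $\max_{L_{\max}\in[L,nL]}M(p,\tau;L_{\max})$ over $p,\tau\in(0,1]$;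 (ii) for every $L_{\max}\in[L,nL]$, $T(p^\star,\tau^\star;L_{\max})$ is of the order of $$T^{\mathrm{realistic}}=\max\Big\{\sqrt{\tfrac{L\max\{\omega+1,\mu^r_{\omega,\alpha}\}}{\alpha\mu}},\sqrt{\tfrac{L_{\max}\omega\max\{\omega+1,\mu^r_{\omega,\alpha}\}}{n\mu}},\tfrac1\alpha,\omega+1,\mu^r_{\omega,\alpha}\Big\};$$ (iii) the total communication complexity with this choice, $M(p^\star,\tau^\star;L_{\max})$, is of the order of $K^r\,T^{\mathrm{realistic}}+d$.
   Context: This concerns the method 2Direction for minimizing $f=\frac1n\sum_{i=1}^n f_i$ over $\mathbb R^d$ with $n$ workers, where each $f_i$ is $L_i$-smooth and convex, $L_{\max}=\max_i L_i$, $f$ is $L$-smooth and $\mu$-strongly convex (so that necessarily $L\le L_{\max}\le nL$). Workers use unbiased compressors with variance parameter $\omega$ (i.e. $\mathbb E[\mathcal C(x)]=x$, $\mathbb E\|\mathcal C(x)-x\|^2\le\omega\|x\|^2$) whose expected density (i.e. $\sup_x\mathbb E\|\mathcal C(x)\|_0$, the expected number of nonzero coordinates sent) is $K_\omega$; the server uses a biased compressor with contraction parameter $\alpha$ (i.e. $\mathbb E\|\mathcal C(x)-x\|^2\le(1-\alpha)\|x\|^2$) and expected density $K_\alpha$. The method has two hyper-parameters: a probability $p$ and a momentum $\tau$. Up to logarithmic factors, $T(p,\tau;L_{\max})$ is the number of iterations the method needs in the strongly convex case, and $M(p,\tau;L_{\max})$ is its total communication complexity $(1-r)\cdot(\text{worker-to-server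 cost})+r\cdot(\text{server-to-worker cost})$, where $r\in[0,1]$ weights the relative cost of the two directions (workers send $\Theta(K_\omega)$ coordinates per iteration; the server broadcasts $\Theta(K_\alpha)$ coordinates per iteration plus $\Theta(d)$ uncompressed coordinates with probability $p$; $d$ coordinates are sent at initialization). Here the ratio $L_{\max}/L$ is assumed unknown, hence the worst case over $L_{\max}\in[L,nL]$. "Of the order of" means equal up to universal positive multiplicative constants. *)

theory Defs
  imports Complex_Main
begin

definition mu_r :: "nat \<Rightarrow> real \<Rightarrow> real \<Rightarrow> real \<Rightarrow> real" where
  "mu_r d r Kw Ka = r * real d / ((1 - r) * Kw + r * Ka)"

definition K_r :: "real \<Rightarrow> real \<Rightarrow> real \<Rightarrow> real" where
  "K_r r Kw Ka = (1 - r) * Kw + r * Ka"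

definition T_iter :: "nat \<Rightarrow> real \<Rightarrow> real \<Rightarrow> real \<Rightarrow> real \<Rightarrow> real \<Rightarrow> real \<Rightarrow> real \<Rightarrow> real" where
  "T_iter n w a mu L p tau Lmax = Max
     { sqrt (L / (a * p * mu)),
       sqrt (L / (a * tau * mu)),
       sqrt (sqrt (L * Lmax) * (w + 1) * sqrt (w * tau) / (a * sqrt (real n) * mu)),
       sqrt (sqrt (L * Lmax) * sqrt (w + 1) * sqrt (w * tau) / (a * sqrt p * sqrt (real n) * mu)),
       sqrt (Lmax * w * (w + 1)^2 * p / (real n * mu)),
       sqrt (Lmax * w / (real n * p * mu)),
       1 / a, 1 / tau, w + 1, 1 / p }"

definition M_comm :: "nat \<Rightarrow> nat \<Rightarrow> real \<Rightarrow> real \<Rightarrow> real \<Rightarrow> real \<Rightarrow> real \<Rightarrow> real \<Rightarrow> real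
    \<Rightarrow> real \<Rightarrow> real \<Rightarrow> real \<Rightarrow> real" where
  "M_comm n d r w a Kw Ka mu L p tau Lmax =
     ((1 - r) * Kw + r * (Ka + p * real d)) * T_iter n w a mu L p tau Lmax + real d"

definition M_worst :: "nat \<Rightarrow> nat \<Rightarrow> real \<Rightarrow> real \<Rightarrow> real \<Rightarrow> real \<Rightarrow> real \<Rightarrow> real \<Rightarrow> real
    \<Rightarrow> real \<Rightarrow> real \<Rightarrow> real" where
  "M_worst n d r w a Kw Ka mu L p tau =
     (SUP Lmax \<in> {L .. real n * L}. M_comm n d r w a Kw Ka mu L p tau Lmax)"

text \<open>p_star = min(1/(w+1), 1/mu_r) with the convention 1/0 = +infinity.\<close>
definition p_star :: "nat \<Rightarrow> real \<Rightarrow> real \<Rightarrow> real \<Rightarrow> real \<Rightarrow> real" where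
  "p_star d r w Kw Ka =
     (if mu_r d r Kw Ka = 0 then 1 / (w + 1) else min (1 / (w + 1)) (1 / mu_r d r Kw Ka))"

definition tau_star :: "nat \<Rightarrow> real \<Rightarrow> real \<Rightarrow> real \<Rightarrow> real \<Rightarrow> real" where
  "tau_star d r w Kw Ka = p_star d r w Kw Ka powr (1/3) / (w + 1) powr (2/3)"

definition T_realistic :: "nat \<Rightarrow> nat \<Rightarrow> real \<Rightarrow> real \<Rightarrow> real \<Rightarrow> real \<Rightarrow> real \<Rightarrow> real \<Rightarrow> real
    \<Rightarrow> real \<Rightarrow> real" where
  "T_realistic n d r w a Kw Ka mu L Lmax = Max
     { sqrt (L * max (w + 1) (mu_r d r Kw Ka) / (a * mu)),
       sqrt (Lmax * w * max (w + 1) (mu_r d r Kw Ka) / (real n * mu)),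
       1 / a, w + 1, mu_r d r Kw Ka }"

definition params_ok :: "nat \<Rightarrow> nat \<Rightarrow> real \<Rightarrow> real \<Rightarrow> real \<Rightarrow> real \<Rightarrow> real \<Rightarrow> real \<Rightarrow> real \<Rightarrow> bool" where
  "params_ok n d r w a Kw Ka mu L \<longleftrightarrow>
     1 \<le> n \<and> 1 \<le> d \<and> 0 \<le> r \<and> r \<le> 1 \<and> 0 \<le> w \<and> 0 < a \<and> a \<le> 1 \<and>
     0 < Kw \<and> 0 < Ka \<and> 0 < mu \<and> mu \<le> L"

end

theory Submission
  imports Defs
begin

(* With P = max (w + 1) mu_r the choice p* = 1 / P satisfies p* <= tau* <= 1 / (w + 1), and with
   these bounds every term of T(p*, tau*; Lmax) is dominated by a term of T_realistic and
   conversely, so (ii) holds with equality.  Since M = K_r (1 + p mu_r) T + d and p* mu_r <= 1,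
   (iii) follows.  For (i), T is increasing in Lmax, so the worst case is Lmax = nL.  There, for
   arbitrary (p, tau), each term of T_realistic is at most 2 (1 + p mu_r) T(p, tau; nL):
   L (w + 1) / (a mu) is bounded via 1/p, 1/tau or the first cross term, L w (w + 1) / mu is the
   geometric mean of the two terms containing p, and the mu_r-parts cost the factor p mu_r,
   which is exactly the extra server cost of (p, tau) in M. *)

lemma cube_root_scaling_bounds:
  fixes p x :: real
  assumes "0 < p" "0 < x" "p * x \<le> 1"
  shows "p \<le> p powr (1/3) / x powr (2/3)" "p powr (1/3) / x powr (2/3) * x \<le> 1"
proof -
  have split: "y = y powr (1/3) * y powr (2/3)" if "0 < y" for y :: real
    using that by (simp flip: powr_add)
  have "p powr (1/3) / x powr (2/3) * x = (p * x) powr (1/3)"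
    using assms split[of x] by (simp add: powr_mult field_simps)
  also have "\<dots> \<le> 1" using assms by (simp add: powr_le1)
  finally show "p powr (1/3) / x powr (2/3) * x \<le> 1" .
  have "p * x powr (2/3) = p powr (1/3) * (p * x) powr (2/3)"
    using assms split[of p] by (simp add: powr_mult field_simps)
  also have "\<dots> \<le> p powr (1/3)" using assms by (simp add: powr_le1 mult_left_le)
  finally show "p \<le> p powr (1/3) / x powr (2/3)" using assms by (simp add: field_simps)
qed

lemma plus_one_le_cases:
  fixes w p tau :: real
  assumes "0 \<le> w" "0 < p" "p \<le> 1" "0 < tau"
  shows "w + 1 \<le> 2 / p \<or> w + 1 \<le> 1 / tau \<or> 1 \<le> 2 * sqrt (w * tau)"
proof (cases "w < 1 \<or> tau * (w + 1) \<le> 1")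
  case True
  moreover have "w < 1 \<Longrightarrow> p * (w + 1) \<le> 1 * 2" using assms by (intro mult_mono) auto
  ultimately show ?thesis using assms by (auto simp: field_simps)
next
  case False
  have "2 * (w + 1) * tau \<le> 4 * w * tau" using False assms by (intro mult_right_mono) auto
  then have "1/4 \<le> w * tau" using False by (auto simp: field_simps)
  then have "sqrt (1/4) \<le> sqrt (w * tau)" by (rule real_sqrt_le_mono)
  then show ?thesis by (simp add: real_sqrt_divide)
qed

lemma mult_plus_one_le_twice:
  fixes X S w p tau :: real
  assumes "0 \<le> X" "0 \<le> w" "0 < p" "p \<le> 1" "0 < tau"
    and "X / p \<le> S" "X / tau \<le> S" "X * (w + 1) * sqrt (w * tau) \<le> S"
  shows "X * (w + 1) \<le> 2 * S"
  using plus_one_le_cases[OF assms(2-5)]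
proof (elim disjE)
  assume "w + 1 \<le> 2 / p"
  then have "X * (w + 1) \<le> X * (2 / p)" using assms(1) by (rule mult_left_mono)
  also have "\<dots> = 2 * (X / p)" by simp
  finally show ?thesis using assms(6) by linarith
next
  assume "w + 1 \<le> 1 / tau"
  then have "X * (w + 1) \<le> X * (1 / tau)" using assms(1) by (rule mult_left_mono)
  moreover have "0 \<le> S" using assms(1,5,7) by (meson divide_nonneg_pos order_trans)
  ultimately show ?thesis using assms(7) by simp
next
  assume "1 \<le> 2 * sqrt (w * tau)"
  then have "X * (w + 1) * 1 \<le> X * (w + 1) * (2 * sqrt (w * tau))"
    using assms(1,2) by (intro mult_left_mono) auto
  then show ?thesis using assms(8) by simp
qed

lemma le_of_square_le_mult:
  fixes x y z S :: real
  assumes "x^2 \<le> y * z" "0 \<le> z" "y \<le> S" "z \<le> S"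
  shows "x \<le> S"
proof (rule power2_le_imp_le)
  have "y * z \<le> S * S" using assms by (intro mult_mono) auto
  then show "x^2 \<le> S^2" using assms(1) by (simp add: power2_eq_square)
qed (use assms in simp)

lemma sqrt_mult_le_of_le_mult:
  fixes L N Lmax :: real
  assumes "0 \<le> L" "Lmax \<le> N * L"
  shows "sqrt (L * Lmax) \<le> L * sqrt N"
proof -
  have "L * Lmax \<le> L * L * N" using mult_left_mono[OF assms(2) assms(1)] by (simp add: ac_simps)
  then have "sqrt (L * Lmax) \<le> sqrt (L * L * N)" by simp
  also have "\<dots> = L * sqrt N" using assms by (simp add: real_sqrt_mult)
  finally show ?thesis .
qed

lemma K_r_pos:
  assumes "0 \<le> r" "r \<le> 1" "0 < Kw" "0 < Ka"
  shows "0 < K_r r Kw Ka"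
proof (cases "r = 0")
  case False
  then have "0 < r * Ka" using assms by simp
  moreover have "0 \<le> (1 - r) * Kw" using assms by simp
  ultimately show ?thesis unfolding K_r_def by linarith
qed (use assms in \<open>simp add: K_r_def\<close>)

lemma mu_r_nonneg: "0 \<le> r \<Longrightarrow> 0 < K_r r Kw Ka \<Longrightarrow> 0 \<le> mu_r d r Kw Ka"
  unfolding mu_r_def K_r_def by simp

lemma mu_r_mult_K_r: "0 < K_r r Kw Ka \<Longrightarrow> mu_r d r Kw Ka * K_r r Kw Ka = r * real d"
  unfolding mu_r_def K_r_def by simp

lemma p_star_eq:
  assumes "0 \<le> w" "0 \<le> mu_r d r Kw Ka"
  shows "p_star d r w Kw Ka = 1 / max (w + 1) (mu_r d r Kw Ka)"
proof (cases "mu_r d r Kw Ka = 0")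
  case False
  then have "0 < mu_r d r Kw Ka" using assms by simp
  then have "w + 1 \<le> mu_r d r Kw Ka \<longleftrightarrow> 1 / mu_r d r Kw Ka \<le> 1 / (w + 1)"
    using assms inverse_le_iff_le[of "mu_r d r Kw Ka" "w + 1"] by (simp add: inverse_eq_divide)
  then show ?thesis using False unfolding p_star_def by (auto simp: max_def min_def)
qed (use assms in \<open>simp add: p_star_def\<close>)

lemma p_star_tau_star_bounds:
  assumes "0 \<le> w" "0 \<le> mu_r d r Kw Ka"
  shows "0 < p_star d r w Kw Ka" "p_star d r w Kw Ka * mu_r d r Kw Ka \<le> 1"
    "p_star d r w Kw Ka \<le> tau_star d r w Kw Ka" "tau_star d r w Kw Ka * (w + 1) \<le> 1"
proof -
  have p: "p_star d r w Kw Ka = 1 / max (w + 1) (mu_r d r Kw Ka)" by (rule p_star_eq[OF assms])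
  show "0 < p_star d r w Kw Ka" "p_star d r w Kw Ka * mu_r d r Kw Ka \<le> 1"
    using assms unfolding p by (auto simp: field_simps)
  have pw: "p_star d r w Kw Ka * (w + 1) \<le> 1" using assms unfolding p by (auto simp: field_simps)
  show "p_star d r w Kw Ka \<le> tau_star d r w Kw Ka" "tau_star d r w Kw Ka * (w + 1) \<le> 1"
    unfolding tau_star_def using cube_root_scaling_bounds[OF \<open>0 < p_star d r w Kw Ka\<close> _ pw] assms
    by auto
qed

lemma T_iter_max:
  "T_iter n w a mu L p tau Lmax =
     max (sqrt (L / (a * p * mu))) (max (sqrt (L / (a * tau * mu)))
     (max (sqrt (sqrt (L * Lmax) * (w + 1) * sqrt (w * tau) / (a * sqrt (real n) * mu)))
     (max (sqrt (sqrt (L * Lmax) * sqrt (w + 1) * sqrt (w * tau) / (a * sqrt p * sqrt (real n) * mu)))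
     (max (sqrt (Lmax * w * (w + 1)^2 * p / (real n * mu)))
     (max (sqrt (Lmax * w / (real n * p * mu)))
     (max (1 / a) (max (1 / tau) (max (w + 1) (1 / p)))))))))"
  unfolding T_iter_def
  by (simp only: Max_insert finite_insert finite.emptyI insert_not_empty Max_singleton simp_thms)

lemma T_iter_mono_Lmax:
  assumes "0 \<le> L" "Lmax \<le> Lmax'" "0 \<le> w" "0 < p" "0 < tau" "0 < a" "0 < mu"
  shows "T_iter n w a mu L p tau Lmax \<le> T_iter n w a mu L p tau Lmax'"
proof -
  have "sqrt (L * Lmax) \<le> sqrt (L * Lmax')" using assms by (simp add: mult_left_mono)
  then show ?thesis using assms unfolding T_iter_max
    by (intro max.mono order_refl real_sqrt_le_mono divide_right_mono mult_right_mono) auto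
qed

lemma T_realistic_pos:
  assumes "0 < a"
  shows "0 < T_realistic n d r w a Kw Ka mu L Lmax"
proof -
  have "1 / a \<le> T_realistic n d r w a Kw Ka mu L Lmax" unfolding T_realistic_def by (rule Max_ge) auto
  with assms show ?thesis by (meson order_less_le_trans zero_less_divide_1_iff)
qed

lemma M_comm_eq:
  assumes "0 < K_r r Kw Ka"
  shows "M_comm n d r w a Kw Ka mu L p tau Lmax =
    K_r r Kw Ka * (1 + p * mu_r d r Kw Ka) * T_iter n w a mu L p tau Lmax + real d"
proof -
  have "(1 - r) * Kw + r * (Ka + p * real d) = K_r r Kw Ka + p * (r * real d)"
    unfolding K_r_def by (simp add: algebra_simps)
  then show ?thesis
    unfolding M_comm_def mu_r_mult_K_r[OF assms, symmetric] by (simp add: algebra_simps)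
qed

lemma M_worst_eq_M_comm_at_n_L:
  assumes "params_ok n d r w a Kw Ka mu L" "0 < p" "0 < tau"
  shows "M_worst n d r w a Kw Ka mu L p tau = M_comm n d r w a Kw Ka mu L p tau (real n * L)"
  unfolding M_worst_def
proof (rule cSup_eq_maximum)
  show "M_comm n d r w a Kw Ka mu L p tau (real n * L)
      \<in> M_comm n d r w a Kw Ka mu L p tau ` {L .. real n * L}"
    using assms(1) unfolding params_ok_def by auto
next
  fix x assume "x \<in> M_comm n d r w a Kw Ka mu L p tau ` {L .. real n * L}"
  then obtain Lmax where "Lmax \<le> real n * L" and x: "x = M_comm n d r w a Kw Ka mu L p tau Lmax"
    by auto
  moreover have "0 \<le> (1 - r) * Kw + r * (Ka + p * real d)"
    using assms unfolding params_ok_def by simp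
  ultimately show "x \<le> M_comm n d r w a Kw Ka mu L p tau (real n * L)"
    using assms unfolding params_ok_def M_comm_def
    by (auto intro!: mult_left_mono T_iter_mono_Lmax)
qed

lemma T_iter_cross_terms_le:
  assumes n: "1 \<le> n" and L: "0 < L" "L \<le> Lmax" "Lmax \<le> real n * L"
    and a: "0 < a" and mu: "0 < mu" and w: "0 \<le> w"
    and P: "w + 1 \<le> P" and Pp: "P * p = 1" and p0: "0 < p"
    and tau: "0 \<le> tau" "tau * (w + 1) \<le> 1"
  shows "sqrt (L * Lmax) * (w + 1) * sqrt (w * tau) / (a * sqrt (real n) * mu) \<le> L * P / (a * mu)"
    "sqrt (L * Lmax) * sqrt (w + 1) * sqrt (w * tau) / (a * sqrt p * sqrt (real n) * mu)
      \<le> L * P / (a * mu)"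
proof -
  have sn: "0 < sqrt (real n)" using n by simp
  have num: "sqrt (L * Lmax) * sqrt (w * tau) \<le> L * sqrt (real n)"
  proof -
    have "sqrt (w * tau) \<le> 1" using w tau p0 by (simp add: algebra_simps)
    then have "sqrt (L * Lmax) * sqrt (w * tau) \<le> sqrt (L * Lmax)"
      using L by (intro mult_left_le) auto
    also have "\<dots> \<le> L * sqrt (real n)" using L by (intro sqrt_mult_le_of_le_mult) auto
    finally show ?thesis .
  qed
  have num_nonneg: "0 \<le> sqrt (L * Lmax) * sqrt (w * tau)" using L w tau p0 by simp
  show "sqrt (L * Lmax) * (w + 1) * sqrt (w * tau) / (a * sqrt (real n) * mu) \<le> L * P / (a * mu)"
  proof -
    have "sqrt (L * Lmax) * (w + 1) * sqrt (w * tau) \<le> P * (L * sqrt (real n))"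
      using mult_mono[OF P num] P w num_nonneg by (simp add: ac_simps)
    then have "sqrt (L * Lmax) * (w + 1) * sqrt (w * tau) / (a * sqrt (real n) * mu)
        \<le> P * (L * sqrt (real n)) / (a * sqrt (real n) * mu)"
      by (rule divide_right_mono) (use a mu in simp)
    also have "\<dots> = L * P / (a * mu)" using sn by simp
    finally show ?thesis .
  qed
  show "sqrt (L * Lmax) * sqrt (w + 1) * sqrt (w * tau) / (a * sqrt p * sqrt (real n) * mu)
      \<le> L * P / (a * mu)"
  proof -
    have "sqrt (w + 1) \<le> sqrt (P * P * p)" using P Pp by (simp add: mult.assoc)
    also have "\<dots> = P * sqrt p" using P w by (simp add: real_sqrt_mult)
    finally have sqrt_w: "sqrt (w + 1) \<le> P * sqrt p" .
    have "sqrt (L * Lmax) * sqrt (w + 1) * sqrt (w * tau) \<le> P * sqrt p * (L * sqrt (real n))"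
      using mult_mono[OF sqrt_w num] num_nonneg P w p0 by (simp add: ac_simps)
    then have "sqrt (L * Lmax) * sqrt (w + 1) * sqrt (w * tau) / (a * sqrt p * sqrt (real n) * mu)
        \<le> P * sqrt p * (L * sqrt (real n)) / (a * sqrt p * sqrt (real n) * mu)"
      by (rule divide_right_mono) (use a mu p0 in simp)
    also have "\<dots> = L * P / (a * mu)" using sn p0 by simp
    finally show ?thesis .
  qed
qed

lemma T_iter_eq_T_realistic:
  assumes n: "1 \<le> n" and L: "0 < L" "L \<le> Lmax" "Lmax \<le> real n * L"
    and a: "0 < a" and mu: "0 < mu" and w: "0 \<le> w" and m: "0 \<le> mu_r d r Kw Ka"
    and p: "p = 1 / max (w + 1) (mu_r d r Kw Ka)" and tau: "p \<le> tau" "tau * (w + 1) \<le> 1"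
  shows "T_iter n w a mu L p tau Lmax = T_realistic n d r w a Kw Ka mu L Lmax"
proof (rule antisym)
  define P where "P = max (w + 1) (mu_r d r Kw Ka)"
  define R where "R = T_realistic n d r w a Kw Ka mu L Lmax"
  have R: "sqrt (L * P / (a * mu)) \<le> R" "sqrt (Lmax * w * P / (real n * mu)) \<le> R"
      "1 / a \<le> R" "w + 1 \<le> R" "mu_r d r Kw Ka \<le> R"
    unfolding R_def T_realistic_def P_def by (rule Max_ge; simp)+
  have P: "w + 1 \<le> P" "0 < P" "P \<le> R" using R w unfolding P_def by auto
  have p0: "0 < p" and inv_p: "1 / p = P" using P unfolding p P_def by auto
  have Pp: "P * p = 1" using inv_p p0 by (simp add: field_simps)
  have t3: "sqrt (L * Lmax) * (w + 1) * sqrt (w * tau) / (a * sqrt (real n) * mu) \<le> L * P / (a * mu)"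
    and t4: "sqrt (L * Lmax) * sqrt (w + 1) * sqrt (w * tau) / (a * sqrt p * sqrt (real n) * mu)
      \<le> L * P / (a * mu)"
    using T_iter_cross_terms_le[OF n L a mu w P(1) Pp p0] tau p0 by auto
  have t5: "Lmax * w * (w + 1)^2 * p / (real n * mu) \<le> Lmax * w * P / (real n * mu)"
  proof -
    have "(w + 1)^2 * p \<le> P^2 * p" using P w p0 by (intro mult_right_mono power_mono) auto
    also have "\<dots> = P" using Pp by (simp add: power2_eq_square)
    finally have "(w + 1)^2 * p \<le> P" .
    then show ?thesis using L w n mu by (simp add: divide_right_mono mult_left_mono mult.assoc)
  qed
  have p_eq: "p = 1 / P" unfolding p P_def ..
  have t1: "L / (a * p * mu) = L * P / (a * mu)" unfolding p_eq by simp
  have t2: "L / (a * tau * mu) \<le> L * P / (a * mu)"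
    unfolding t1[symmetric] using L a mu p0 tau by (intro divide_left_mono mult_mono) auto
  have t6: "Lmax * w / (real n * p * mu) = Lmax * w * P / (real n * mu)" unfolding p_eq by simp
  have sqrt_le: "sqrt x \<le> R" if "x \<le> y" "sqrt y \<le> R" for x y
    using that real_sqrt_le_mono order_trans by blast
  show "T_iter n w a mu L p tau Lmax \<le> R"
    unfolding T_iter_max max.bounded_iff
    using sqrt_le[OF _ R(1)] sqrt_le[OF _ R(2)] t1 t2 t3 t4 t5 t6 R(3,4) P(3) inv_p
      frac_le[of 1 1 p tau] p0 tau(1) by auto
  have T: "sqrt (L / (a * p * mu)) \<le> T_iter n w a mu L p tau Lmax"
      "sqrt (Lmax * w / (real n * p * mu)) \<le> T_iter n w a mu L p tau Lmax"
      "1 / a \<le> T_iter n w a mu L p tau Lmax" "w + 1 \<le> T_iter n w a mu L p tau Lmax"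
      "1 / p \<le> T_iter n w a mu L p tau Lmax"
    unfolding T_iter_def by (rule Max_ge; simp)+
  have "mu_r d r Kw Ka \<le> 1 / p" using inv_p unfolding P_def by simp
  with T show "R \<le> T_iter n w a mu L p tau Lmax"
    unfolding R_def T_realistic_def t1 t6 P_def[symmetric] by (intro Max.boundedI) auto
qed

lemma T_iter_at_n_L_bounds:
  fixes w a mu L p tau :: real
  assumes n: "1 \<le> n" and L: "0 < L"
  defines "T \<equiv> T_iter n w a mu L p tau (real n * L)"
  shows "L / (a * p * mu) \<le> T^2" "L / (a * tau * mu) \<le> T^2"
    "L * (w + 1) * sqrt (w * tau) / (a * mu) \<le> T^2"
    "L * w * (w + 1)^2 * p / mu \<le> T^2" "L * w / (p * mu) \<le> T^2"
    "1 / a \<le> T" "w + 1 \<le> T" "1 / p \<le> T"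
proof -
  have T: "sqrt (L / (a * p * mu)) \<le> T" "sqrt (L / (a * tau * mu)) \<le> T"
      "sqrt (sqrt (L * (real n * L)) * (w + 1) * sqrt (w * tau) / (a * sqrt (real n) * mu)) \<le> T"
      "sqrt (real n * L * w * (w + 1)^2 * p / (real n * mu)) \<le> T"
      "sqrt (real n * L * w / (real n * p * mu)) \<le> T"
    unfolding T_def T_iter_def by (rule Max_ge; simp)+
  have sqrt_nL: "sqrt (L * (real n * L)) = L * sqrt (real n)"
    using L by (simp add: real_sqrt_mult ac_simps)
  show "L / (a * p * mu) \<le> T^2" "L / (a * tau * mu) \<le> T^2"
    "L * (w + 1) * sqrt (w * tau) / (a * mu) \<le> T^2"
    "L * w * (w + 1)^2 * p / mu \<le> T^2" "L * w / (p * mu) \<le> T^2"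
    using T[THEN sqrt_le_D] n by (simp_all add: sqrt_nL)
  show "1 / a \<le> T" "w + 1 \<le> T" "1 / p \<le> T"
    unfolding T_def T_iter_def by (rule Max_ge; simp)+
qed

(* Only at Lmax = nL does the first cross term of T_iter dominate L (w + 1) / (a mu). *)
lemma T_realistic_le_T_iter:
  assumes n: "1 \<le> n" and L: "0 < L" and a: "0 < a" and mu: "0 < mu" and w: "0 \<le> w"
    and m: "0 \<le> mu_r d r Kw Ka" and p: "0 < p" "p \<le> 1" and tau: "0 < tau"
  shows "T_realistic n d r w a Kw Ka mu L (real n * L)
    \<le> 2 * (1 + p * mu_r d r Kw Ka) * T_iter n w a mu L p tau (real n * L)"
proof -
  define M where "M = mu_r d r Kw Ka"
  define T where "T = T_iter n w a mu L p tau (real n * L)"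
  define c where "c = 1 + p * M"
  note T = T_iter_at_n_L_bounds[OF n L, where w = w and a = a and mu = mu and p = p and tau = tau,
      folded T_def]
  have T0: "0 < T" using T(6) a by (meson order_less_le_trans zero_less_divide_1_iff)
  have pM: "0 \<le> p * M" using p m unfolding M_def by simp
  have c: "1 \<le> c" "p * M \<le> c" unfolding c_def using pM by auto
  have scale: "2 * T^2 \<le> (2 * c * T)^2" "p * M * T^2 \<le> (2 * c * T)^2"
  proof -
    have "c \<le> c^2" using c by (simp add: power2_eq_square mult_le_cancel_left1)
    then have "2 \<le> 4 * c^2" "p * M \<le> 4 * c^2" using c by auto
    then have "2 * T^2 \<le> (4 * c^2) * T^2" "p * M * T^2 \<le> (4 * c^2) * T^2"
      by (simp_all add: mult_right_mono)
    then show "2 * T^2 \<le> (2 * c * T)^2" "p * M * T^2 \<le> (2 * c * T)^2"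
      by (simp_all add: power_mult_distrib)
  qed
  have T_le: "T \<le> 2 * c * T" using c T0 by simp
  have lin: "L / (a * mu) * (w + 1) \<le> 2 * T^2"
    using L a mu T(1) T(2) T(3) by (intro mult_plus_one_le_twice[OF _ w p tau]) (simp_all add: ac_simps)
  have quad: "L * w * (w + 1) / mu \<le> T^2"
    by (rule le_of_square_le_mult[OF _ _ T(4) T(5)])
      (use p mu L w in \<open>simp_all add: field_simps power2_eq_square\<close>)
  have "L / (a * mu) * M = p * M * (L / (a * p * mu))" using p by (simp add: field_simps)
  also have "\<dots> \<le> p * M * T^2" using T(1) pM by (rule mult_left_mono)
  finally have via_p1: "L / (a * mu) * M \<le> p * M * T^2" .
  have "L * w * M / mu = p * M * (L * w / (p * mu))" using p by (simp add: field_simps)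
  also have "\<dots> \<le> p * M * T^2" using T(5) pM by (rule mult_left_mono)
  finally have via_p2: "L * w * M / mu \<le> p * M * T^2" .
  have "M = p * M * (1 / p)" using p by simp
  also have "\<dots> \<le> c * T" using T(8) pM c T0 p by (intro mult_mono) auto
  also have "\<dots> \<le> 2 * c * T" using c T0 by simp
  finally have via_p3: "M \<le> 2 * c * T" .
  have "L * max (w + 1) M / (a * mu) \<le> (2 * c * T)^2"
    using order_trans[OF lin scale(1)] order_trans[OF via_p1 scale(2)] by (simp add: max_def)
  moreover have "real n * L * w * max (w + 1) M / (real n * mu) \<le> (2 * c * T)^2"
  proof -
    have "L * w * (w + 1) / mu \<le> (2 * c * T)^2" using quad scale(1) zero_le_power2[of T] by linarith
    then show ?thesis using order_trans[OF via_p2 scale(2)] n by (simp add: max_def)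
  qed
  moreover have "1 / a \<le> 2 * c * T" "w + 1 \<le> 2 * c * T" using T(6,7) T_le by linarith+
  moreover have "0 \<le> 2 * c * T" using T0 c by simp
  ultimately show ?thesis
    unfolding T_realistic_def M_def[symmetric] T_def[symmetric] c_def[symmetric]
    using via_p3 by (intro Max.boundedI) (auto intro: real_le_lsqrt)
qed

lemma params_ok_K_r_mu_r:
  assumes "params_ok n d r w a Kw Ka mu L"
  shows "0 < K_r r Kw Ka" "0 \<le> mu_r d r Kw Ka"
  using assms unfolding params_ok_def by (auto intro: K_r_pos mu_r_nonneg)

lemma T_iter_star_eq_T_realistic:
  assumes ok: "params_ok n d r w a Kw Ka mu L" and "L \<le> Lmax" "Lmax \<le> real n * L"
  shows "T_iter n w a mu L (p_star d r w Kw Ka) (tau_star d r w Kw Ka) Lmax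
    = T_realistic n d r w a Kw Ka mu L Lmax"
proof -
  have w: "0 \<le> w" using ok unfolding params_ok_def by simp
  note m = params_ok_K_r_mu_r(2)[OF ok]
  show ?thesis
    using ok assms m p_star_tau_star_bounds[OF w m] unfolding params_ok_def
    by (intro T_iter_eq_T_realistic p_star_eq[OF w m]) auto
qed

lemma M_comm_star_bounds:
  assumes ok: "params_ok n d r w a Kw Ka mu L" and "L \<le> Lmax" "Lmax \<le> real n * L"
  shows "K_r r Kw Ka * T_realistic n d r w a Kw Ka mu L Lmax + real d
      \<le> M_comm n d r w a Kw Ka mu L (p_star d r w Kw Ka) (tau_star d r w Kw Ka) Lmax"
    "M_comm n d r w a Kw Ka mu L (p_star d r w Kw Ka) (tau_star d r w Kw Ka) Lmax
      \<le> 2 * (K_r r Kw Ka * T_realistic n d r w a Kw Ka mu L Lmax + real d)"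
proof -
  define K where "K = K_r r Kw Ka"
  define T where "T = T_realistic n d r w a Kw Ka mu L Lmax"
  define q where "q = p_star d r w Kw Ka * mu_r d r Kw Ka"
  have "0 < K" unfolding K_def using params_ok_K_r_mu_r[OF ok] by simp
  moreover have "0 < T" unfolding T_def using ok by (simp add: params_ok_def T_realistic_pos)
  ultimately have KT: "0 \<le> K * T" by simp
  have w: "0 \<le> w" using ok unfolding params_ok_def by simp
  note m = params_ok_K_r_mu_r(2)[OF ok]
  have "0 \<le> q" "q \<le> 1" using p_star_tau_star_bounds[OF w m] m unfolding q_def by simp_all
  then have "0 \<le> q * (K * T)" "q * (K * T) \<le> K * T" using KT by (simp_all add: mult_left_le_one_le)
  moreover have "M_comm n d r w a Kw Ka mu L (p_star d r w Kw Ka) (tau_star d r w Kw Ka) Lmax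
      = K * T + q * (K * T) + real d"
    unfolding M_comm_eq[OF params_ok_K_r_mu_r(1)[OF ok]] T_iter_star_eq_T_realistic[OF assms]
    by (simp add: K_def T_def q_def algebra_simps)
  ultimately show
    "K * T + real d \<le> M_comm n d r w a Kw Ka mu L (p_star d r w Kw Ka) (tau_star d r w Kw Ka) Lmax"
    "M_comm n d r w a Kw Ka mu L (p_star d r w Kw Ka) (tau_star d r w Kw Ka) Lmax \<le> 2 * (K * T + real d)"
    by simp_all
qed

lemma M_worst_star_le:
  assumes ok: "params_ok n d r w a Kw Ka mu L" and p: "0 < p" "p \<le> 1" and tau: "0 < tau"
  shows "M_worst n d r w a Kw Ka mu L (p_star d r w Kw Ka) (tau_star d r w Kw Ka)
    \<le> 4 * M_worst n d r w a Kw Ka mu L p tau"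
proof -
  have w: "0 \<le> w" and a: "0 < a" and mu: "0 < mu" and n: "1 \<le> n" and L: "0 < L"
    using ok unfolding params_ok_def by auto
  note K = params_ok_K_r_mu_r(1)[OF ok] and m = params_ok_K_r_mu_r(2)[OF ok]
  note star = p_star_tau_star_bounds[OF w m]
  define TR where "TR = T_realistic n d r w a Kw Ka mu L (real n * L)"
  define T where "T = T_iter n w a mu L p tau (real n * L)"
  define c where "c = 1 + p * mu_r d r Kw Ka"
  have "M_worst n d r w a Kw Ka mu L (p_star d r w Kw Ka) (tau_star d r w Kw Ka)
      = K_r r Kw Ka * (1 + p_star d r w Kw Ka * mu_r d r Kw Ka) * TR + real d"
    using ok star n L unfolding TR_def
    by (simp add: M_worst_eq_M_comm_at_n_L M_comm_eq[OF K] T_iter_star_eq_T_realistic)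
  also have "\<dots> \<le> K_r r Kw Ka * 2 * TR + real d"
    using K star(2) T_realistic_pos[OF a] unfolding TR_def by (simp add: mult_left_mono mult_right_mono)
  also have "\<dots> \<le> K_r r Kw Ka * 2 * (2 * c * T) + real d"
    using T_realistic_le_T_iter[OF n L a mu w m p tau] K unfolding TR_def T_def c_def by simp
  also have "\<dots> \<le> 4 * (K_r r Kw Ka * c * T + real d)" by (simp add: algebra_simps)
  also have "\<dots> = 4 * M_worst n d r w a Kw Ka mu L p tau"
    using ok p tau unfolding T_def c_def by (simp add: M_worst_eq_M_comm_at_n_L M_comm_eq[OF K])
  finally show ?thesis .
qed

theorem theorem2:
  shows
  "(\<exists>C>0. \<forall>n d r w a Kw Ka mu L p tau.
      params_ok n d r w a Kw Ka mu L \<and> 0 < p \<and> p \<le> 1 \<and> 0 < tau \<and> tau \<le> 1 \<longrightarrow>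
      M_worst n d r w a Kw Ka mu L (p_star d r w Kw Ka) (tau_star d r w Kw Ka)
        \<le> C * M_worst n d r w a Kw Ka mu L p tau)
   \<and> (\<exists>c1>0. \<exists>c2>0. \<forall>n d r w a Kw Ka mu L Lmax.
      params_ok n d r w a Kw Ka mu L \<and> L \<le> Lmax \<and> Lmax \<le> real n * L \<longrightarrow>
      c1 * T_realistic n d r w a Kw Ka mu L Lmax
        \<le> T_iter n w a mu L (p_star d r w Kw Ka) (tau_star d r w Kw Ka) Lmax \<and>
      T_iter n w a mu L (p_star d r w Kw Ka) (tau_star d r w Kw Ka) Lmax
        \<le> c2 * T_realistic n d r w a Kw Ka mu L Lmax)
   \<and> (\<exists>c1>0. \<exists>c2>0. \<forall>n d r w a Kw Ka mu L Lmax.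
      params_ok n d r w a Kw Ka mu L \<and> L \<le> Lmax \<and> Lmax \<le> real n * L \<longrightarrow>
      c1 * (K_r r Kw Ka * T_realistic n d r w a Kw Ka mu L Lmax + real d)
        \<le> M_comm n d r w a Kw Ka mu L (p_star d r w Kw Ka) (tau_star d r w Kw Ka) Lmax \<and>
      M_comm n d r w a Kw Ka mu L (p_star d r w Kw Ka) (tau_star d r w Kw Ka) Lmax
        \<le> c2 * (K_r r Kw Ka * T_realistic n d r w a Kw Ka mu L Lmax + real d))"
  apply (intro conjI)
  subgoal by (intro exI[of _ 4]) (auto intro: M_worst_star_le)
  subgoal by (intro exI[of _ 1] conjI) (simp_all add: T_iter_star_eq_T_realistic)
  subgoal by (intro exI[of _ 1] conjI exI[of _ 2] allI impI; (elim conjE)?)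
      (simp_all only: mult_1 M_comm_star_bounds zero_less_one zero_less_numeral)
  done

end
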